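(* Let $N = n+1\ge 4$ be even, let $\boldsymbol{\lambda} = (\lambda_1,\dots,\lambda_N) \in \Lambda_N$, let $\mathbf{v}_0 = \mathbf{0}$, $\mathbf{v}_i = \lambda_i(\mathbf{e}_{i-1}-\mathbf{e}_i)$ for $1\le i\le N$, $V_N=\{\mathbf{v}_0,\dots,\mathbf{v}_N\}$, and $\Delta_+(G^{\mathbf{0}}_{\boldsymbol{\lambda}}) = \{\operatorname{conv}(V_N \setminus \{\mathbf{v}_i\}) \mid \lambda_i = \lambda_1\}$. Lift each simplex $T$ of $\Delta_+(G^{\mathbf{0}}_{\boldsymbol{\lambda}})$ to $\Omega_\omega(T) = \operatorname{conv}\{(\mathbf{a},\omega(\mathbf{a})) \mid \mathbf{a} \text{ a vertex of } T\} \subset \mathbb{R}^{n+1}$. If $\lambda_1 = 1$, then the upward-pointing inner normal vectors (with last coordinate $1$) of the simplices in $\Omega_\omega(\Delta_+(G^{\mathbf{0}}_{\boldsymbol{\lambda}}))$ are $\mathbf{x}_{\boldsymbol{\lambda}} = (x_1,\dots,x_{n+1})$ where $x_i = \sum_{j=1}^i \lambda_j$ for $1 \le i < n+1$ and $x_{n+1} = 1$, together with \[ \mathbf{y}_{\boldsymbol{\lambda},j} = \mathbf{x}_{\boldsymbol{\lambda}} + \sum_{k=1}^{j-1}\mathbf{e}_k \] for each $j > 1$ such that $\lambda_j = 1$ (here $\mathbf{e}_k$ denotes the standard basis vectors of $\mathbb{R}^{n+1}$). If $\lambda_1 = -1$, then the upward-pointing inner normal vectors are $\mathbf{x}_{\boldsymbol{\lambda}}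 = \sigma(\mathbf{x}_{-\boldsymbol{\lambda}})$ and $\mathbf{y}_{\boldsymbol{\lambda},j} = \sigma(\mathbf{y}_{-\boldsymbol{\lambda},j})$ for each $j>1$ with $\lambda_j < 0$, where $\sigma:\mathbb{R}^{n+1}\to\mathbb{R}^{n+1}$ is the map negating the first $n$ coordinates.
   Context: $\mathbf{e}_1,\dots,\mathbf{e}_n$ is the standard basis of $\mathbb{R}^n$ with the convention $\mathbf{e}_0 = \mathbf{e}_N = \mathbf{0}$. For even $N$, $\Lambda_N = \{(\lambda_1,\dots,\lambda_N) \in \{-1,1\}^N \mid \sum_i \lambda_i = 0\}$. The cycle graph $C_N$ has vertices $0,\dots,N-1$ and edges $\{0,1\},\{1,2\},\dots,\{N-2,N-1\},\{N-1,0\}$; $S_{C_N} = \{\mathbf{0}\} \cup \{\mathbf{e}_i - \mathbf{e}_j \mid \{i,j\} \text{ an edge of } C_N\}$. The height function $\omega: S_{C_N}\to\mathbb{Z}$ is $\omega(\mathbf{0}) = 0$, $\omega(\pm\mathbf{e}_1) = 2$, and $\omega(\mathbf{a}) = 1$ otherwise. A vector in $\mathbb{R}^{n+1}$ is upward-pointing if its last coordinate is positive. *)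

theory Defs
  imports "HOL-Analysis.Analysis" "HOL-Library.Function_Algebras"
begin

text \<open>Points of R^m are represented as functions nat => real; a point of R^m
  uses the coordinates 1..m (and is 0 elsewhere). We equip functions with the
  pointwise real vector space structure so that the library notions
  convex hull and extreme_point_of (vertices) apply.\<close>

instantiation "fun" :: (type, real_vector) real_vector
begin
definition scaleR_fun :: "real \<Rightarrow> ('a \<Rightarrow> 'b) \<Rightarrow> 'a \<Rightarrow> 'b"
  where "scaleR_fun r f = (\<lambda>x. r *\<^sub>R f x)"
instance
  by standard (simp_all add: scaleR_fun_def fun_eq_iff scaleR_add_right scaleR_add_left)
end

text \<open>Standard basis vector e_k of R^n, n = N - 1, with e_0 = e_N = 0.\<close>
definition ebasis :: "nat \<Rightarrow> nat \<Rightarrow> (nat \<Rightarrow> real)" where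
  "ebasis N k = (if 1 \<le> k \<and> k \<le> N - 1 then (\<lambda>i. if i = k then 1 else 0) else 0)"

definition ebasis1 :: "nat \<Rightarrow> nat \<Rightarrow> (nat \<Rightarrow> real)" where
  "ebasis1 N k = (if 1 \<le> k \<and> k \<le> N then (\<lambda>i. if i = k then 1 else 0) else 0)"

text \<open>Lambda_N: lambda indexed by 1..N (values outside 1..N irrelevant).\<close>
definition Lambda :: "nat \<Rightarrow> (nat \<Rightarrow> int) set" where
  "Lambda N = {lam. (\<forall>i\<in>{1..N}. lam i \<in> {-1, 1}) \<and> (\<Sum>i=1..N. lam i) = 0}"

definition cycle_edge :: "nat \<Rightarrow> nat \<Rightarrow> nat \<Rightarrow> bool" where
  "cycle_edge N i j \<longleftrightarrow> i < N \<and> j < N \<and> (j = (i + 1) mod N \<or> i = (j + 1) mod N)"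

definition S_C :: "nat \<Rightarrow> (nat \<Rightarrow> real) set" where
  "S_C N = {0} \<union> {ebasis N i - ebasis N j | i j. cycle_edge N i j}"

definition omega :: "nat \<Rightarrow> (nat \<Rightarrow> real) \<Rightarrow> real" where
  "omega N a = (if a = 0 then 0 else if a = ebasis N 1 \<or> a = - ebasis N 1 then 2 else 1)"

definition vv :: "nat \<Rightarrow> (nat \<Rightarrow> int) \<Rightarrow> nat \<Rightarrow> (nat \<Rightarrow> real)" where
  "vv N lam i = (if i = 0 then 0 else of_int (lam i) *\<^sub>R (ebasis N (i - 1) - ebasis N i))"

definition VN :: "nat \<Rightarrow> (nat \<Rightarrow> int) \<Rightarrow> (nat \<Rightarrow> real) set" where
  "VN N lam = vv N lam ` {0..N}"

definition Delta_plus :: "nat \<Rightarrow> (nat \<Rightarrow> int) \<Rightarrow> (nat \<Rightarrow> real) set set" where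
  "Delta_plus N lam = {convex hull (VN N lam - {vv N lam i}) | i. i \<in> {1..N} \<and> lam i = lam 1}"

text \<open>Lifting a point a of R^n to (a, omega(a)) in R^(n+1); coordinate n+1 = N.\<close>
definition lift :: "nat \<Rightarrow> (nat \<Rightarrow> real) \<Rightarrow> (nat \<Rightarrow> real)" where
  "lift N a = (\<lambda>i. if i = N then omega N a else a i)"

definition Omega :: "nat \<Rightarrow> (nat \<Rightarrow> real) set \<Rightarrow> (nat \<Rightarrow> real) set" where
  "Omega N T = convex hull {lift N a | a. a extreme_point_of T}"

definition dotN :: "nat \<Rightarrow> (nat \<Rightarrow> real) \<Rightarrow> (nat \<Rightarrow> real) \<Rightarrow> real" where
  "dotN N u p = (\<Sum>i=1..N. u i * p i)"

text \<open>u (a vector of R^(n+1), last coordinate 1, hence upward-pointing) is an inner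
  normal vector of the lifted cell P: u is orthogonal to P, and P lies on the
  lower side, i.e. the linear functional u is minimised on P over all lifted
  points of the configuration S_{C_N}.\<close>
definition upward_inner_normal :: "nat \<Rightarrow> (nat \<Rightarrow> real) set \<Rightarrow> (nat \<Rightarrow> real) \<Rightarrow> bool" where
  "upward_inner_normal N P u \<longleftrightarrow>
     (\<forall>i. i \<notin> {1..N} \<longrightarrow> u i = 0) \<and> u N = 1 \<and>
     (\<forall>p\<in>P. \<forall>q\<in>P. dotN N u p = dotN N u q) \<and>
     (\<forall>p\<in>P. \<forall>a\<in>S_C N. dotN N u p \<le> dotN N u (lift N a))"

definition xvec :: "nat \<Rightarrow> (nat \<Rightarrow> int) \<Rightarrow> (nat \<Rightarrow> real)" where
  "xvec N lam = (\<lambda>i. if 1 \<le> i \<and> i < N then (\<Sum>j=1..i. of_int (lam j)) else if i = N then 1 else 0)"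

definition yvec :: "nat \<Rightarrow> (nat \<Rightarrow> int) \<Rightarrow> nat \<Rightarrow> (nat \<Rightarrow> real)" where
  "yvec N lam j = xvec N lam + (\<Sum>k=1..j-1. ebasis1 N k)"

definition sigma :: "nat \<Rightarrow> (nat \<Rightarrow> real) \<Rightarrow> (nat \<Rightarrow> real)" where
  "sigma N u = (\<lambda>i. if 1 \<le> i \<and> i < N then - u i else u i)"

end

theory Submission
  imports Defs
begin

(*
  Each cell T_i = conv (V_N - {v_i}) is a simplex with vertices v_m, m ~= i. Since
  v_0 = 0 is one of them, an upward normal u of the lifted cell is characterised by
  u . (v_m, omega(v_m)) = 0 for m ~= i. As v_m = lambda_m (e_(m-1) - e_m), this
  prescribes the increments U_(m-1) - U_m = -lambda_m omega(v_m) of the horizontal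
  coordinates U of u for all m ~= i; since U_0 = U_N = 0 the remaining increment is
  forced, so u is unique, namely U_m = lambda_1 + ... + lambda_m + [m < i] lambda_1.
  This is x_lambda for i = 1 and y_(lambda,i), or its sigma-image when lambda_1 = -1,
  otherwise. It is an inner normal because every increment, including the one at m = i
  thanks to lambda_i = lambda_1, is bounded in absolute value by the height
  omega(+-(e_(m-1) - e_m)) of the corresponding edge vector of S_(C_N).
*)

lemma eq_if_equal_increments:
  fixes f g :: "nat \<Rightarrow> 'a::ab_group_add"
  assumes ends: "f 0 = g 0" "f n = g n"
    and steps: "\<And>m. m \<in> {1..n} \<Longrightarrow> m \<noteq> i \<Longrightarrow> f (m - 1) - f m = g (m - 1) - g m"
    and "k \<le> n"
  shows "f k = g k"
proof -
  have same_diff: "f m - g m = f (Suc m) - g (Suc m)" if "Suc m \<le> n" "Suc m \<noteq> i" for m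
    using steps[of "Suc m"] that by (simp add: algebra_simps)
  have "f k - g k = 0"
  proof (cases "k < i")
    case True
    have "f j - g j = f 0 - g 0" if "j \<le> k" for j
      using that
    proof (induction j)
      case (Suc j)
      then show ?case using same_diff[of j] True \<open>k \<le> n\<close> by simp
    qed simp
    then show ?thesis using ends by simp
  next
    case False
    have "f k - g k = f n - g n"
      using \<open>k \<le> n\<close>
    proof (induction k rule: inc_induct)
      case (step j)
      then show ?case using same_diff[of j] False by simp
    qed simp
    then show ?thesis using ends by simp
  qed
  then show ?thesis by simp
qed

lemma sum_fun_apply: "(sum f A) x = (\<Sum>a\<in>A. f a x)"
  for f :: "'b \<Rightarrow> 'c \<Rightarrow> 'd::comm_monoid_add"
  by (induction A rule: infinite_finite_induct) (auto simp: plus_fun_def zero_fun_def)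

lemma linear_dotN: "linear (dotN N u)"
  by (rule linearI) (simp_all add: dotN_def scaleR_fun_def sum.distrib sum_distrib_left algebra_simps)

lemma dotN_const_on_convex_hull:
  assumes "\<And>s. s \<in> S \<Longrightarrow> dotN N u s = c" and "p \<in> convex hull S"
  shows "dotN N u p = c"
proof -
  have "convex (dotN N u -` {c})"
    by (rule convex_linear_vimage[OF linear_dotN convex_singleton])
  then have "convex hull S \<subseteq> dotN N u -` {c}"
    using assms(1) by (intro hull_minimal) auto
  then show ?thesis using assms(2) by auto
qed

lemma ebasis_apply: "ebasis N k x = (if 1 \<le> k \<and> k \<le> N - 1 \<and> x = k then 1 else 0)"
  by (simp add: ebasis_def)

lemma ebasis_last: "ebasis N k N = 0"
  by (auto simp: ebasis_def zero_fun_def)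

definition hcoord :: "nat \<Rightarrow> (nat \<Rightarrow> real) \<Rightarrow> nat \<Rightarrow> real" where
  "hcoord N u k = (if 1 \<le> k \<and> k \<le> N - 1 then u k else 0)"

lemma hcoord_eq: "g 0 = 0 \<Longrightarrow> g N = 0 \<Longrightarrow> k \<le> N \<Longrightarrow> hcoord N g k = g k"
  by (cases "k = 0"; cases "k = N") (auto simp: hcoord_def)

lemma dotN_ebasis: "dotN N u (ebasis N k) = hcoord N u k"
  by (auto simp: dotN_def ebasis_def hcoord_def zero_fun_def if_distrib cong: if_cong)

definition edge :: "nat \<Rightarrow> nat \<Rightarrow> nat \<Rightarrow> real" where
  "edge N m = ebasis N (m - 1) - ebasis N m"

lemma edge_last: "edge N m N = 0"
  by (simp add: edge_def ebasis_last)

lemma dotN_edge: "dotN N u (edge N m) = hcoord N u (m - 1) - hcoord N u m"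
  by (simp add: edge_def linear_diff[OF linear_dotN] dotN_ebasis)

lemma dotN_indicator_edge:
  assumes "1 \<le> p" "p < q" "q \<le> N" "m \<in> {1..N}"
  shows "dotN N (\<lambda>x. if p \<le> x \<and> x < q then 1 else 0) (edge N m)
    = (if m = q then 1 else if m = p then -1 else 0)"
proof -
  have "hcoord N (\<lambda>x. if p \<le> x \<and> x < q then 1 else 0) k = (if p \<le> k \<and> k < q then 1 else 0)"
    if "k \<le> N" for k
    using assms that by (intro hcoord_eq) auto
  then show ?thesis
    using assms by (auto simp: dotN_edge)
qed

lemma ebasis_wrap: "p < N \<Longrightarrow> ebasis N (Suc p mod N) = ebasis N (Suc p)"
  by (cases "Suc p = N") (auto simp: ebasis_def)

lemma S_C_edges:
  assumes "a \<in> S_C N"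
  shows "a = 0 \<or> (\<exists>m\<in>{1..N}. a = edge N m \<or> a = - edge N m)"
proof -
  have "\<exists>m\<in>{1..N}. ebasis N p - ebasis N q = edge N m \<or> ebasis N p - ebasis N q = - edge N m"
    if "cycle_edge N p q" for p q
  proof (cases "q = (p + 1) mod N")
    case True
    then have "ebasis N p - ebasis N q = edge N (Suc p)"
      using that by (simp add: cycle_edge_def ebasis_wrap edge_def)
    then show ?thesis
      using that by (intro bexI[of _ "Suc p"]) (auto simp: cycle_edge_def)
  next
    case False
    then have "p = Suc q mod N" "q < N"
      using that by (auto simp: cycle_edge_def)
    then have "ebasis N p - ebasis N q = - edge N (Suc q)"
      by (simp add: ebasis_wrap edge_def)
    then show ?thesis
      using \<open>q < N\<close> by (intro bexI[of _ "Suc q"]) auto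
  qed
  then show ?thesis using assms unfolding S_C_def by blast
qed

lemma omega_uminus: "omega N (- a) = omega N a"
  unfolding omega_def by (auto simp: minus_equation_iff[of a])

lemma omega_edge:
  assumes "3 \<le> N" and "m \<in> {1..N}"
  shows "omega N (edge N m) = (if m = 1 then 2 else 1)"
proof (cases "m = 1")
  case True
  have "ebasis N 1 1 = 1"
    using assms(1) by (simp add: ebasis_def)
  then have "ebasis N 1 \<noteq> 0" by auto
  moreover have "edge N 1 = - ebasis N 1"
    by (simp add: edge_def ebasis_def)
  ultimately show ?thesis
    using True by (simp add: omega_def)
next
  case False
  define c where "c = (if m < N then m else N - 1)"
  have "edge N m c \<noteq> 0" and "ebasis N 1 c = 0"
    using assms False by (auto simp: c_def edge_def ebasis_apply)
  then have "edge N m \<noteq> 0" "edge N m \<noteq> ebasis N 1" "edge N m \<noteq> - ebasis N 1"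
    by (metis zero_fun_apply, metis, metis neg_equal_0_iff_equal uminus_apply)
  then show ?thesis
    using False by (simp add: omega_def)
qed

lemma lift_zero: "lift N 0 = 0"
  by (auto simp: lift_def omega_def)

lemma dotN_lift:
  assumes "a N = 0" and "1 \<le> N"
  shows "dotN N u (lift N a) = dotN N u a + u N * omega N a"
proof -
  have "dotN N u (lift N a) - dotN N u a = (\<Sum>i\<in>{1..N}. u i * (lift N a i - a i))"
    unfolding dotN_def by (simp add: sum_subtractf algebra_simps)
  also have "\<dots> = (\<Sum>i\<in>{1..N}. if i = N then u N * omega N a else 0)"
    by (rule sum.cong) (auto simp: lift_def assms(1))
  also have "\<dots> = u N * omega N a" using assms(2) by simp
  finally show ?thesis by simp
qed

lemma vv_zero: "vv N lam 0 = 0"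
  by (simp add: vv_def)

lemma vv_edge: "1 \<le> m \<Longrightarrow> vv N lam m = of_int (lam m) *\<^sub>R edge N m"
  by (simp add: vv_def edge_def)

lemma yvec_apply:
  assumes "j \<le> N + 1"
  shows "yvec N lam j m = xvec N lam m + (if 1 \<le> m \<and> m < j then 1 else 0)"
proof -
  have "(\<Sum>k=1..j-1. ebasis1 N k) m = (\<Sum>k\<in>{1..j-1}. if k = m then 1 else 0)"
    unfolding sum_fun_apply using assms by (intro sum.cong) (auto simp: ebasis1_def)
  also have "\<dots> = (if 1 \<le> m \<and> m < j then 1 else 0)"
    by auto
  finally show ?thesis
    by (simp add: yvec_def)
qed

locale balanced_signs =
  fixes N :: nat and lam :: "nat \<Rightarrow> int"
  assumes lam_in_Lambda: "lam \<in> Lambda N" and three_le_N: "3 \<le> N"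
begin

lemma lam_cases: "i \<in> {1..N} \<Longrightarrow> lam i = 1 \<or> lam i = -1"
  using lam_in_Lambda by (auto simp: Lambda_def)

lemma lam_sq: "i \<in> {1..N} \<Longrightarrow> real_of_int (lam i) * real_of_int (lam i) = 1"
  using lam_cases[of i] by auto

lemma omega_vv: "m \<in> {1..N} \<Longrightarrow> omega N (vv N lam m) = omega N (edge N m)"
  using lam_cases[of m] by (auto simp: vv_edge omega_uminus)

lemma dotN_vv: "m \<in> {1..N} \<Longrightarrow> dotN N u (vv N lam m) = lam m * dotN N u (edge N m)"
  by (simp add: vv_edge linear_scale[OF linear_dotN])

lemma dotN_lift_vv:
  assumes "m \<in> {1..N}"
  shows "dotN N u (lift N (vv N lam m)) = lam m * dotN N u (edge N m) + u N * omega N (edge N m)"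
proof -
  have "vv N lam m N = 0"
    using assms by (simp add: vv_edge edge_last scaleR_fun_def)
  then show ?thesis
    using assms three_le_N by (simp add: dotN_lift dotN_vv omega_vv)
qed

definition psum :: "nat \<Rightarrow> real" where
  "psum m = (\<Sum>j=1..m. real_of_int (lam j))"

lemma psum_0: "psum 0 = 0"
  by (simp add: psum_def)

lemma psum_Suc: "psum (Suc m) = psum m + lam (Suc m)"
  by (simp add: psum_def)

lemma psum_N: "psum N = 0"
  using lam_in_Lambda by (simp add: psum_def Lambda_def flip: of_int_sum)

definition cell_normal :: "nat \<Rightarrow> nat \<Rightarrow> real" where
  "cell_normal i m = (if 1 \<le> m \<and> m < N then psum m + (if m < i then real_of_int (lam 1) else 0)
     else if m = N then 1 else 0)"

lemma hcoord_cell_normal: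
  "i \<le> N \<Longrightarrow> m \<le> N \<Longrightarrow>
    hcoord N (cell_normal i) m = psum m + (if 1 \<le> m \<and> m < i then real_of_int (lam 1) else 0)"
  by (cases "m = 0") (auto simp: hcoord_def cell_normal_def psum_0 psum_N)

lemma dotN_edge_cell_normal:
  assumes i: "i \<in> {1..N}" "lam i = lam 1" and m: "m \<in> {1..N}"
  shows "dotN N (cell_normal i) (edge N m) =
    (if m = i then (if i = 1 then - lam 1 else 0) else - lam m * omega N (edge N m))"
proof -
  obtain k where k: "m = Suc k" using m by (cases m) auto
  have D: "dotN N (cell_normal i) (edge N m) =
     (if 1 \<le> k \<and> k < i then real_of_int (lam 1) else 0) - lam m
     - (if m < i then real_of_int (lam 1) else 0)"
  proof -
    have "k \<le> N" "Suc k \<le> N" "i \<le> N" using i m k by auto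
    then show ?thesis
      unfolding dotN_edge k by (simp only: hcoord_cell_normal psum_Suc) auto
  qed
  have om: "omega N (edge N m) = (if m = 1 then 2 else 1)"
    using omega_edge[OF three_le_N m] .
  consider "m = i" | "m < i" | "i < m" by linarith
  then show ?thesis
  proof cases
    case 1
    with k have "k < i" "\<not> m < i" by simp_all
    then show ?thesis
      using D 1 i(2) k by (cases k) simp_all
  next
    case 2
    then have "\<not> m = i" "k < i" using k by simp_all
    then show ?thesis
      using D om 2 k by (cases k) simp_all
  next
    case 3
    then have "\<not> m = i" "\<not> k < i" "\<not> m < i" "m \<noteq> 1" using k i(1) by simp_all
    then show ?thesis
      using D om by simp
  qed
qed

lemma cell_normal_last: "cell_normal i N = 1"
  using three_le_N by (simp add: cell_normal_def)

lemma abs_dotN_edge_cell_normal_le: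
  assumes i: "i \<in> {1..N}" "lam i = lam 1" and m: "m \<in> {1..N}"
  shows "\<bar>dotN N (cell_normal i) (edge N m)\<bar> \<le> omega N (edge N m)"
proof -
  have om: "omega N (edge N m) = (if m = 1 then 2 else 1)"
    using omega_edge[OF three_le_N m] .
  have "\<bar>real_of_int (lam 1)\<bar> = 1" "\<bar>real_of_int (lam m)\<bar> = 1"
    using lam_cases[of 1] lam_cases[of m] m three_le_N by auto
  moreover have "dotN N (cell_normal i) (edge N m) =
    (if m = i then (if i = 1 then - lam 1 else 0) else - lam m * (if m = 1 then 2 else 1))"
    using dotN_edge_cell_normal[OF i m] om by simp
  ultimately show ?thesis
    using om by (cases "m = i"; cases "m = 1") (simp_all add: abs_mult)
qed

lemma cell_normal_lower_bound:
  assumes i: "i \<in> {1..N}" "lam i = lam 1" and a: "a \<in> S_C N"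
  shows "0 \<le> dotN N (cell_normal i) (lift N a)"
proof -
  consider "a = 0" | m where "m \<in> {1..N}" "a = edge N m \<or> a = - edge N m"
    using S_C_edges[OF a] by blast
  then show ?thesis
  proof cases
    case 1
    then show ?thesis by (simp add: lift_zero linear_0[OF linear_dotN])
  next
    case 2
    have "a N = 0" using 2(2) by (auto simp: edge_last)
    then have "dotN N (cell_normal i) (lift N a) = dotN N (cell_normal i) a + omega N (edge N m)"
      using 2(2) three_le_N by (auto simp: dotN_lift cell_normal_last omega_uminus)
    moreover have "\<bar>dotN N (cell_normal i) a\<bar> = \<bar>dotN N (cell_normal i) (edge N m)\<bar>"
      using 2(2) by (auto simp: linear_neg[OF linear_dotN])
    ultimately show ?thesis
      using abs_dotN_edge_cell_normal_le[OF i 2(1)] by linarith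
  qed
qed

lemma dotN_neg_psum_vv:
  assumes j: "j \<in> {1..N}"
  shows "dotN N (\<lambda>x. - psum x) (vv N lam j) = 1"
proof -
  obtain k where k: "j = Suc k" using j by (cases j) auto
  have "hcoord N (\<lambda>x. - psum x) l = - psum l" if "l \<le> N" for l
    using that by (intro hcoord_eq) (simp_all add: psum_0 psum_N)
  then have "dotN N (\<lambda>x. - psum x) (edge N j) = lam j"
    using j k by (simp add: dotN_edge psum_Suc)
  then show ?thesis
    using j lam_sq[of j] by (simp add: dotN_vv)
qed

lemma vv_notin_convex_hull_others:
  assumes k: "k \<in> {1..N}" and m: "m \<le> N" "m \<noteq> k"
  shows "vv N lam m \<notin> convex hull (vv N lam ` ({0..N} - {k, m}))"
proof
  assume hull: "vv N lam m \<in> convex hull (vv N lam ` ({0..N} - {k, m}))"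
  \<comment> \<open>Separate \<open>v\<^sub>m\<close> by a functional that is constant on the other vertices: for \<open>m = 0\<close>
    the partial sums, otherwise the indicator of the coordinates between \<open>k\<close> and \<open>m\<close>.\<close>
  show False
  proof (cases "m = 0")
    case True
    have "dotN N (\<lambda>x. - psum x) s = 1" if s: "s \<in> vv N lam ` ({0..N} - {k, m})" for s
    proof -
      obtain j where j: "j \<in> {0..N} - {k, m}" "s = vv N lam j" using s by blast
      then have "j \<in> {1..N}" using True by auto
      then show ?thesis using j by (simp add: dotN_neg_psum_vv)
    qed
    then have "dotN N (\<lambda>x. - psum x) (vv N lam m) = 1"
      using hull by (rule dotN_const_on_convex_hull)
    then show False
      using True by (simp add: vv_zero linear_0[OF linear_dotN])
  next
    case False
    define p q where "p = min k m" and "q = max k m"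
    let ?g = "\<lambda>x. if p \<le> x \<and> x < q then 1 else 0 :: real"
    have pq: "1 \<le> p" "p < q" "q \<le> N" and "{p, q} = {k, m}"
      using k m False by (auto simp: p_def q_def)
    have dot_g: "dotN N ?g (vv N lam j) = (if j = q then lam q else if j = p then - lam p else 0)"
      if "j \<in> {1..N}" for j
      using pq that by (simp add: dotN_vv dotN_indicator_edge)
    have "dotN N ?g s = 0" if s: "s \<in> vv N lam ` ({0..N} - {k, m})" for s
    proof -
      obtain j where j: "j \<in> {0..N} - {k, m}" "s = vv N lam j" using s by blast
      then have "j \<le> N" "j \<noteq> p" "j \<noteq> q"
        using \<open>{p, q} = {k, m}\<close> by auto
      then show ?thesis
        using j by (cases "j = 0") (simp_all add: vv_zero linear_0[OF linear_dotN] dot_g)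
    qed
    then have "dotN N ?g (vv N lam m) = 0"
      using hull by (rule dotN_const_on_convex_hull)
    moreover have "m = p \<or> m = q" "m \<in> {1..N}"
      using \<open>{p, q} = {k, m}\<close> m False by auto
    then have "dotN N ?g (vv N lam m) \<noteq> 0"
      using dot_g[of m] lam_cases[of p] lam_cases[of q] pq by auto
    ultimately show False by simp
  qed
qed

lemma vv_inj:
  assumes "a \<le> N" "b \<le> N" "vv N lam a = vv N lam b"
  shows "a = b"
proof (rule ccontr)
  assume "a \<noteq> b"
  define k where "k = (if 1 \<notin> {a, b} then 1 else if 2 \<notin> {a, b} then 2 else 3 :: nat)"
  have k: "k \<in> {1..N}" "k \<noteq> a" "k \<noteq> b"
    using three_le_N \<open>a \<noteq> b\<close> by (auto simp: k_def)
  have "vv N lam b \<in> convex hull (vv N lam ` ({0..N} - {k, a}))"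
    using assms(2) k \<open>a \<noteq> b\<close> by (intro hull_inc imageI) auto
  then show False
    using vv_notin_convex_hull_others[OF k(1) assms(1) k(2)[symmetric]] assms(3) by simp
qed

lemma VN_minus_vv: "i \<le> N \<Longrightarrow> VN N lam - {vv N lam i} = vv N lam ` ({0..N} - {i})"
  unfolding VN_def using vv_inj by auto

lemma extreme_points_cell:
  assumes "i \<in> {1..N}"
  shows "{a. a extreme_point_of convex hull (VN N lam - {vv N lam i})} = vv N lam ` ({0..N} - {i})"
proof -
  have "vv N lam m extreme_point_of convex hull (vv N lam ` ({0..N} - {i}))"
    if m: "m \<in> {0..N} - {i}" for m
  proof -
    have "vv N lam ` ({0..N} - {i}) = insert (vv N lam m) (vv N lam ` ({0..N} - {i, m}))"
      using m by auto
    moreover have "vv N lam m \<notin> convex hull (vv N lam ` ({0..N} - {i, m}))"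
      using vv_notin_convex_hull_others assms m by auto
    ultimately show ?thesis
      by (simp add: extreme_point_of_convex_hull_insert)
  qed
  then show ?thesis
    using assms by (auto simp: VN_minus_vv dest: extreme_point_of_convex_hull)
qed

lemma Omega_cell:
  assumes "i \<in> {1..N}"
  shows "Omega N (convex hull (VN N lam - {vv N lam i}))
    = convex hull ((\<lambda>m. lift N (vv N lam m)) ` ({0..N} - {i}))"
proof -
  have "{lift N a | a. a extreme_point_of convex hull (VN N lam - {vv N lam i})}
      = lift N ` vv N lam ` ({0..N} - {i})"
    using extreme_points_cell[OF assms] by blast
  then show ?thesis
    unfolding Omega_def image_comp comp_def by simp
qed

lemma cell_normal_orthogonal:
  assumes i: "i \<in> {1..N}" "lam i = lam 1" and m: "m \<in> {0..N} - {i}"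
  shows "dotN N (cell_normal i) (lift N (vv N lam m)) = 0"
proof (cases "m = 0")
  case True
  then show ?thesis by (simp add: vv_zero lift_zero linear_0[OF linear_dotN])
next
  case False
  then have m': "m \<in> {1..N}" "m \<noteq> i" using m by auto
  let ?l = "real_of_int (lam m)" and ?h = "omega N (edge N m)"
  have "dotN N (cell_normal i) (lift N (vv N lam m)) = ?l * (- ?l * ?h) + ?h"
    using m' by (simp add: dotN_lift_vv dotN_edge_cell_normal[OF i] cell_normal_last)
  also have "\<dots> = (1 - ?l * ?l) * ?h"
    by (simp add: algebra_simps)
  finally show ?thesis
    using lam_sq[OF m'(1)] by simp
qed

lemma cell_normal_is_upward_inner_normal:
  assumes i: "i \<in> {1..N}" "lam i = lam 1"
  shows "upward_inner_normal N (Omega N (convex hull (VN N lam - {vv N lam i}))) (cell_normal i)"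
proof -
  have on_cell: "dotN N (cell_normal i) p = 0"
    if p: "p \<in> Omega N (convex hull (VN N lam - {vv N lam i}))" for p
  proof -
    have "dotN N (cell_normal i) s = 0" if "s \<in> (\<lambda>m. lift N (vv N lam m)) ` ({0..N} - {i})" for s
      using that cell_normal_orthogonal[OF i] by blast
    then show ?thesis
      using p unfolding Omega_cell[OF i(1)] by (rule dotN_const_on_convex_hull)
  qed
  show ?thesis
    unfolding upward_inner_normal_def
  proof (intro conjI ballI allI impI)
    fix x :: nat
    assume "x \<notin> {1..N}"
    then show "cell_normal i x = 0" using three_le_N by (auto simp: cell_normal_def)
  next
    fix p q
    assume "p \<in> Omega N (convex hull (VN N lam - {vv N lam i}))"
      and "q \<in> Omega N (convex hull (VN N lam - {vv N lam i}))"
    then show "dotN N (cell_normal i) p = dotN N (cell_normal i) q"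
      by (simp add: on_cell)
  next
    fix p a
    assume "p \<in> Omega N (convex hull (VN N lam - {vv N lam i}))" and "a \<in> S_C N"
    then show "dotN N (cell_normal i) p \<le> dotN N (cell_normal i) (lift N a)"
      by (simp add: on_cell cell_normal_lower_bound[OF i])
  qed (rule cell_normal_last)
qed

lemma upward_inner_normal_cell_unique:
  assumes i: "i \<in> {1..N}"
    and u: "upward_inner_normal N (Omega N (convex hull (VN N lam - {vv N lam i}))) u"
    and v: "upward_inner_normal N (Omega N (convex hull (VN N lam - {vv N lam i}))) v"
  shows "u = v"
proof -
  have orth: "dotN N w (lift N (vv N lam m)) = 0"
    if w: "upward_inner_normal N (Omega N (convex hull (VN N lam - {vv N lam i}))) w"
      and m: "m \<in> {0..N} - {i}" for w m
  proof -
    have "lift N (vv N lam k) \<in> Omega N (convex hull (VN N lam - {vv N lam i}))"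
      if "k \<in> {0..N} - {i}" for k
      unfolding Omega_cell[OF i] using that by (intro hull_inc imageI)
    then have "dotN N w (lift N (vv N lam m)) = dotN N w (lift N (vv N lam 0))"
      using w m i unfolding upward_inner_normal_def by simp
    then show ?thesis
      by (simp add: vv_zero lift_zero linear_0[OF linear_dotN])
  qed
  have uN: "u N = 1" and vN: "v N = 1"
    using u v by (simp_all add: upward_inner_normal_def)
  have same_edges: "dotN N u (edge N m) = dotN N v (edge N m)" if m: "m \<in> {1..N}" "m \<noteq> i" for m
  proof -
    have "lam m * dotN N u (edge N m) + omega N (edge N m) = 0"
      and "lam m * dotN N v (edge N m) + omega N (edge N m) = 0"
      using orth[OF u, of m] orth[OF v, of m] m uN vN by (simp_all add: dotN_lift_vv)
    then have "lam m * dotN N u (edge N m) = lam m * dotN N v (edge N m)"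
      by linarith
    moreover have "real_of_int (lam m) \<noteq> 0"
      using lam_cases[OF m(1)] by auto
    ultimately show ?thesis
      by simp
  qed
  have hcoords: "hcoord N u k = hcoord N v k" if "k \<le> N" for k
  proof (rule eq_if_equal_increments[where i = i])
    show "hcoord N u 0 = hcoord N v 0" and "hcoord N u N = hcoord N v N"
      by (auto simp: hcoord_def)
    show "hcoord N u (m - 1) - hcoord N u m = hcoord N v (m - 1) - hcoord N v m"
      if "m \<in> {1..N}" "m \<noteq> i" for m
      using same_edges[OF that] by (simp only: dotN_edge)
  qed (rule that)
  show ?thesis
  proof
    fix x
    consider "1 \<le> x \<and> x < N" | "x = N" | "x \<notin> {1..N}" by fastforce
    then show "u x = v x"
    proof cases
      case 1
      then have "x \<le> N - 1" by linarith
      then show ?thesis using 1 hcoords[of x] by (simp add: hcoord_def)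
    next
      case 2
      then show ?thesis using uN vN by simp
    next
      case 3
      then show ?thesis using u v by (simp add: upward_inner_normal_def)
    qed
  qed
qed

lemma upward_inner_normal_cell_iff:
  assumes "i \<in> {1..N}" "lam i = lam 1"
  shows "upward_inner_normal N (Omega N (convex hull (VN N lam - {vv N lam i}))) u
    \<longleftrightarrow> u = cell_normal i"
  using upward_inner_normal_cell_unique cell_normal_is_upward_inner_normal assms by blast

lemma upward_inner_normals:
  "{u. \<exists>T\<in>Delta_plus N lam. upward_inner_normal N (Omega N T) u}
    = cell_normal ` {i \<in> {1..N}. lam i = lam 1}"
  unfolding Delta_plus_def using upward_inner_normal_cell_iff by auto

lemma cell_normal_1_eq_xvec: "cell_normal 1 = xvec N lam"
  by (auto simp: cell_normal_def xvec_def psum_def)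

lemma cell_normal_1_eq_sigma_xvec: "cell_normal 1 = sigma N (xvec N (\<lambda>i. - lam i))"
  by (auto simp: cell_normal_def xvec_def psum_def sigma_def sum_negf)

lemma cell_normal_eq_yvec: "lam 1 = 1 \<Longrightarrow> j \<in> {2..N} \<Longrightarrow> cell_normal j = yvec N lam j"
  by (auto simp: cell_normal_def yvec_apply xvec_def psum_def)

lemma cell_normal_eq_sigma_yvec:
  "lam 1 = -1 \<Longrightarrow> j \<in> {2..N} \<Longrightarrow> cell_normal j = sigma N (yvec N (\<lambda>i. - lam i) j)"
  by (auto simp: cell_normal_def yvec_apply xvec_def psum_def sigma_def sum_negf)

end

theorem lemma5p4:
  fixes N :: nat and lam :: "nat \<Rightarrow> int"
  assumes "even N" and "N \<ge> 4" and "lam \<in> Lambda N"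
  shows "(lam 1 = 1 \<longrightarrow>
            {u. \<exists>T\<in>Delta_plus N lam. upward_inner_normal N (Omega N T) u}
              = {xvec N lam} \<union> {yvec N lam j | j. j \<in> {2..N} \<and> lam j = 1})
       \<and> (lam 1 = -1 \<longrightarrow>
            {u. \<exists>T\<in>Delta_plus N lam. upward_inner_normal N (Omega N T) u}
              = {sigma N (xvec N (\<lambda>i. - lam i))}
                \<union> {sigma N (yvec N (\<lambda>i. - lam i) j) | j. j \<in> {2..N} \<and> lam j < 0})"
proof -
  interpret balanced_signs N lam
    using assms(2,3) by unfold_locales auto
  have "{i \<in> {1..N}. lam i = lam 1} = insert 1 {j \<in> {2..N}. lam j = lam 1}"
    using three_le_N by auto
  then have normals: "{u. \<exists>T\<in>Delta_plus N lam. upward_inner_normal N (Omega N T) u}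
      = insert (cell_normal 1) (cell_normal ` {j \<in> {2..N}. lam j = lam 1})"
    by (simp add: upward_inner_normals)
  show ?thesis
  proof (intro conjI impI)
    assume "lam 1 = 1"
    then show "{u. \<exists>T\<in>Delta_plus N lam. upward_inner_normal N (Omega N T) u}
        = {xvec N lam} \<union> {yvec N lam j | j. j \<in> {2..N} \<and> lam j = 1}"
      unfolding normals cell_normal_1_eq_xvec using cell_normal_eq_yvec by auto
  next
    assume "lam 1 = -1"
    then have "lam j = lam 1 \<longleftrightarrow> lam j < 0" if "j \<in> {2..N}" for j
      using lam_cases[of j] that by auto
    then have "{j \<in> {2..N}. lam j = lam 1} = {j \<in> {2..N}. lam j < 0}"
      by blast
    then show "{u. \<exists>T\<in>Delta_plus N lam. upward_inner_normal N (Omega N T) u}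
        = {sigma N (xvec N (\<lambda>i. - lam i))}
          \<union> {sigma N (yvec N (\<lambda>i. - lam i) j) | j. j \<in> {2..N} \<and> lam j < 0}"
      unfolding normals cell_normal_1_eq_sigma_xvec
      using cell_normal_eq_sigma_yvec \<open>lam 1 = -1\<close> by auto
  qed
qed

end
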